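(* Consider adversarial bandits with $K$ actions and $N$ experts with oblivious losses $\ell_t\in[0,1]^K$ and expert advice $E_{i,t}\in[K]$, and $L_T^*=\min_{i\in[N]}\sum_{t=1}^T\ell_{t,E_{i,t}}$. Let $\tilde\Phi(L)=\mathbb{E}[\min_{p\in\Delta_N}\langle L,p\rangle+F(p,Z)]$ with $\nabla\tilde\Phi\in\Delta_N$, and suppose the full-information GBPA with potential $\tilde\Phi$ is DiffStable($D_\infty$, $\|\cdot\|_\infty$) at level $\epsilon$, i.e. $D_\infty(\nabla\tilde\Phi(\sum_{s<t}v_s),\nabla\tilde\Phi(\sum_{s\le t}v_s))\le\epsilon\|v_t\|_\infty$ for all $t$ and all $v_1,\dots,v_t\in[0,\infty)^N$. Run the following algorithm without clipping: $\bar\phi_0=0$; for each $t$, $p_t=\nabla\tilde\Phi(\bar\phi_{t-1})$, $q_t=\psi_t(p_t)$ where $\psi_t(p)=\sum_{j=1}^K\sum_{i:E_{i,t}=j}p_i\mathbf{e}_j$; draw $j_t\sim q_t$, observe $\ell_{t,j_t}$, set $\hat\ell_t=\frac{\ell_{t,j_t}}{q_{t,j_t}}\mathbf{e}_{j_t}\in\mathbb{R}^K$ and $\bar\phi_t=\bar\phi_{t-1}+\phi_t(\hat\ell_t)$ where $\phi_t(\hat\ell)=\sum_{j=1}^K\sum_{i:E_{i,t}=j}\hat\ell_j\mathbf{e}_i\in\mathbb{R}^N$. Then \[\mathbb{E}\Big[\sum_{t=1}^T\ell_{t,j_t}\Big]-L_T^*\le\epsilon\,\mathbb{E}\Big[\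sum_{t=1}^T\hat\ell_{t,j_t}^2q_{t,j_t}\Big]+\mathbb{E}\Big[\max_pF(p,Z)-\min_pF(p,Z)\Big].\]
   Context: $\Delta_m$ is the probability simplex in $\mathbb{R}^m$; max and min over $p$ are over $\Delta_N$. For distributions $P,Q$, $D_\infty(P,Q)=\sup_B\log\frac{P(B)}{Q(B)}$. Expectations are over the learner's randomness and $Z$. *)

theory Defs
  imports "HOL-Probability.Probability"
begin

text \<open>Experts are elements of a finite type 'n (N = CARD('n)), actions elements of a
finite type 'k (K = CARD('k)). Rounds are indexed 1..T.\<close>

definition prob_simplex :: "(real^'n::finite) set" where
  "prob_simplex = {p. (\<forall>i. 0 \<le> p $ i) \<and> (\<Sum>i\<in>UNIV. p $ i) = 1}"

definition dinf :: "real^'n::finite \<Rightarrow> real^'n \<Rightarrow> ereal" where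
  "dinf P Q = (SUP B\<in>{B. 0 < (\<Sum>i\<in>B. P $ i)}.
      (if (\<Sum>i\<in>B. Q $ i) = 0 then \<infinity>
       else ereal (ln ((\<Sum>i\<in>B. P $ i) / (\<Sum>i\<in>B. Q $ i)))))"

definition Phi_tilde :: "'z measure \<Rightarrow> (real^'n::finite \<Rightarrow> 'z \<Rightarrow> real) \<Rightarrow> real^'n \<Rightarrow> real" where
  "Phi_tilde M F L = (\<integral>z. (INF p\<in>prob_simplex. L \<bullet> p + F p z) \<partial>M)"

text \<open>Cumulative estimated loss vector  bar-phi_t  of the algorithm along the action
history js (js t = j_t), given gradient map g, expert advice E and losses l.\<close>
fun cumest :: "(real^'n::finite \<Rightarrow> real^'n) \<Rightarrow> ('n \<Rightarrow> nat \<Rightarrow> 'k::finite)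
      \<Rightarrow> (nat \<Rightarrow> 'k \<Rightarrow> real) \<Rightarrow> (nat \<Rightarrow> 'k) \<Rightarrow> nat \<Rightarrow> real^'n" where
  "cumest g E l js 0 = 0"
| "cumest g E l js (Suc t) =
     (let p = g (cumest g E l js t);
          q = (\<Sum>i\<in>{i. E i (Suc t) = js (Suc t)}. p $ i)
      in cumest g E l js t +
         (\<chi> i. if E i (Suc t) = js (Suc t) then l (Suc t) (js (Suc t)) / q else 0))"

definition pvec :: "(real^'n::finite \<Rightarrow> real^'n) \<Rightarrow> ('n \<Rightarrow> nat \<Rightarrow> 'k::finite)
      \<Rightarrow> (nat \<Rightarrow> 'k \<Rightarrow> real) \<Rightarrow> (nat \<Rightarrow> 'k) \<Rightarrow> nat \<Rightarrow> real^'n" where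
  "pvec g E l js t = g (cumest g E l js (t - 1))"

definition qprob :: "(real^'n::finite \<Rightarrow> real^'n) \<Rightarrow> ('n \<Rightarrow> nat \<Rightarrow> 'k::finite)
      \<Rightarrow> (nat \<Rightarrow> 'k \<Rightarrow> real) \<Rightarrow> (nat \<Rightarrow> 'k) \<Rightarrow> nat \<Rightarrow> 'k \<Rightarrow> real" where
  "qprob g E l js t j = (\<Sum>i\<in>{i. E i t = j}. pvec g E l js t $ i)"

definition lhat :: "(real^'n::finite \<Rightarrow> real^'n) \<Rightarrow> ('n \<Rightarrow> nat \<Rightarrow> 'k::finite)
      \<Rightarrow> (nat \<Rightarrow> 'k \<Rightarrow> real) \<Rightarrow> (nat \<Rightarrow> 'k) \<Rightarrow> nat \<Rightarrow> real" where
  "lhat g E l js t = l t (js t) / qprob g E l js t (js t)"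

text \<open>Expectation over the learner's randomness of a functional f of the action
history j_1..j_T, where j_t ~ q_t given j_1..j_{t-1} (chain rule).\<close>
definition ExpL :: "(real^'n::finite \<Rightarrow> real^'n) \<Rightarrow> ('n \<Rightarrow> nat \<Rightarrow> 'k::finite)
      \<Rightarrow> (nat \<Rightarrow> 'k \<Rightarrow> real) \<Rightarrow> nat \<Rightarrow> ((nat \<Rightarrow> 'k) \<Rightarrow> real) \<Rightarrow> real" where
  "ExpL g E l T f = (\<Sum>js\<in>PiE {1..T} (\<lambda>_. UNIV).
       (\<Prod>t\<in>{1..T}. qprob g E l js t (js t)) * f js)"

end

theory Submission
  imports Defs
begin

text \<open>Since the potential is an expectation of minima of affine functions of L, it is concave,
so its gradient g satisfies g(x + v) \<bullet> v \<le> Phi(x + v) - Phi(x). In each round the increment v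
of the estimated cumulative loss is nonnegative, p_t \<bullet> v is the loss incurred and the sup norm
of v is the loss estimate lhat; stability in D_\<infinity> therefore bounds (p_t - g(x + v)) \<bullet> v by
\<epsilon> lhat^2 q. Summing over the rounds bounds the loss along every action history by
Phi(bar-phi_T) - Phi(0) plus the stability term. Finally Phi(L) - Phi(0) \<le> L_i + E[max F - min F],
testing the vertex e_i of the simplex, and the loss estimates are unbiased, so the expectation of
the i-th coordinate of bar-phi_T is at most the loss of expert i.\<close>

lemma concave_on_has_derivative_le:
  fixes f :: "'a::real_normed_vector \<Rightarrow> real"
  assumes conc: "concave_on UNIV f" and der: "(f has_derivative f') (at x)"
  shows "f y \<le> f x + f' (y - x)"
proof -
  define h where "h s = - f (x + s *\<^sub>R (y - x))" for s :: real
  have "convex_on UNIV h"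
  proof (rule convex_onI)
    fix t a b :: real assume "0 < t" "t < 1"
    then have "(1 - t) * f (x + a *\<^sub>R (y - x)) + t * f (x + b *\<^sub>R (y - x))
        \<le> f ((1 - t) *\<^sub>R (x + a *\<^sub>R (y - x)) + t *\<^sub>R (x + b *\<^sub>R (y - x)))"
      by (intro concave_onD[OF conc]) auto
    also have "(1 - t) *\<^sub>R (x + a *\<^sub>R (y - x)) + t *\<^sub>R (x + b *\<^sub>R (y - x))
        = x + ((1 - t) *\<^sub>R a + t *\<^sub>R b) *\<^sub>R (y - x)"
      by (simp add: algebra_simps)
    finally show "h ((1 - t) *\<^sub>R a + t *\<^sub>R b) \<le> (1 - t) * h a + t * h b"
      by (simp add: h_def)
  qed simp
  moreover have "(h has_field_derivative - f' (y - x)) (at 0)"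
  proof -
    have "((\<lambda>s. x + s *\<^sub>R (y - x)) has_derivative (\<lambda>s. s *\<^sub>R (y - x))) (at 0)"
      by (auto intro!: derivative_eq_intros)
    from has_derivative_compose[OF this] der
    have "(h has_derivative (\<lambda>s. - f' (s *\<^sub>R (y - x)))) (at 0)"
      unfolding h_def by (auto intro: has_derivative_minus)
    moreover have "(\<lambda>s. - f' (s *\<^sub>R (y - x))) = (*) (- f' (y - x))"
      using linear_cmul[OF has_derivative_linear[OF der]] by auto
    ultimately show ?thesis by (simp add: has_field_derivative_def)
  qed
  ultimately have "- f' (y - x) * (1 - 0) \<le> h 1 - h 0"
    by (intro convex_on_imp_above_tangent) auto
  then show ?thesis by (simp add: h_def)
qed

lemma concave_on_INF_inner_plus:
  fixes F :: "'a::real_inner \<Rightarrow> real"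
  assumes attained: "\<And>L. \<exists>p\<in>A. \<forall>q\<in>A. L \<bullet> p + F p \<le> L \<bullet> q + F q"
  shows "concave_on UNIV (\<lambda>L. INF p\<in>A. L \<bullet> p + F p)"
proof -
  have lower: "(INF q\<in>A. L \<bullet> q + F q) \<le> L \<bullet> p + F p" if "p \<in> A" for L p
  proof -
    obtain m where "m \<in> A" "\<forall>q\<in>A. L \<bullet> m + F m \<le> L \<bullet> q + F q"
      using attained by blast
    with that show ?thesis by (intro cINF_lower bdd_belowI2) auto
  qed
  show ?thesis unfolding concave_on_iff
  proof (intro conjI ballI allI impI)
    fix x y :: 'a and u v :: real assume uv: "0 \<le> u" "0 \<le> v" "u + v = 1"
    obtain p where p: "p \<in> A" "\<forall>q\<in>A. (u *\<^sub>R x + v *\<^sub>R y) \<bullet> p + F p \<le> (u *\<^sub>R x + v *\<^sub>R y) \<bullet> q + F q"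
      using attained by blast
    then have "(INF q\<in>A. (u *\<^sub>R x + v *\<^sub>R y) \<bullet> q + F q) = (u *\<^sub>R x + v *\<^sub>R y) \<bullet> p + F p"
      by (intro cInf_eq_minimum) auto
    also have "\<dots> = u * (x \<bullet> p + F p) + v * (y \<bullet> p + F p)"
      using uv by (simp add: inner_add_left algebra_simps flip: eq_diff_eq)
    finally show "u * (INF q\<in>A. x \<bullet> q + F q) + v * (INF q\<in>A. y \<bullet> q + F q)
        \<le> (INF q\<in>A. (u *\<^sub>R x + v *\<^sub>R y) \<bullet> q + F q)"
      using uv lower[OF p(1)] by (simp add: add_mono mult_left_mono)
  qed simp
qed

lemma concave_on_integral:
  fixes f :: "'a::real_vector \<Rightarrow> 'z \<Rightarrow> real"
  assumes conc: "\<And>z. concave_on S (\<lambda>x. f x z)" and integ: "\<And>x. x \<in> S \<Longrightarrow> integrable M (f x)"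
  shows "concave_on S (\<lambda>x. \<integral>z. f x z \<partial>M)"
  unfolding concave_on_iff
proof (intro conjI ballI allI impI)
  show "convex S" using conc concave_on_imp_convex by blast
  fix x y and u v :: real assume xy: "x \<in> S" "y \<in> S" and uv: "0 \<le> u" "0 \<le> v" "u + v = 1"
  have "u * (\<integral>z. f x z \<partial>M) + v * (\<integral>z. f y z \<partial>M) = (\<integral>z. u * f x z + v * f y z \<partial>M)"
    using integ xy by simp
  also have "\<dots> \<le> (\<integral>z. f (u *\<^sub>R x + v *\<^sub>R y) z \<partial>M)"
  proof (rule integral_mono)
    have "u *\<^sub>R x + v *\<^sub>R y \<in> S"
      using xy uv concave_on_imp_convex[OF conc] by (auto simp: convex_def)
    then show "integrable M (\<lambda>z. f (u *\<^sub>R x + v *\<^sub>R y) z)" using integ by simp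
    show "u * f x z + v * f y z \<le> f (u *\<^sub>R x + v *\<^sub>R y) z" for z
      using concave_onD[OF conc, of v x y z] xy uv by (simp add: eq_diff_eq[of u, symmetric])
  qed (use integ xy in simp)
  finally show "u * (\<integral>z. f x z \<partial>M) + v * (\<integral>z. f y z \<partial>M) \<le> (\<integral>z. f (u *\<^sub>R x + v *\<^sub>R y) z \<partial>M)" .
qed

lemma concave_on_Phi_tilde:
  assumes "\<And>z L. \<exists>p\<in>prob_simplex. \<forall>q\<in>prob_simplex. L \<bullet> p + F p z \<le> L \<bullet> q + F q z"
    and "\<And>L. integrable M (\<lambda>z. INF p\<in>prob_simplex. L \<bullet> p + F p z)"
  shows "concave_on UNIV (Phi_tilde M F)"
  unfolding Phi_tilde_def[abs_def] using assms
  by (intro concave_on_integral concave_on_INF_inner_plus)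

lemma dinf_le_imp_component_le:
  assumes P: "P \<in> prob_simplex" and Q: "Q \<in> prob_simplex" and d: "dinf P Q \<le> ereal \<delta>"
  shows "P $ i - Q $ i \<le> \<delta> * P $ i"
proof (cases "P $ i > 0")
  case False
  then have "P $ i = 0" using P unfolding prob_simplex_def by (auto intro: antisym)
  then show ?thesis using Q unfolding prob_simplex_def by auto
next
  case True
  have "(if Q $ i = 0 then \<infinity> else ereal (ln (P $ i / Q $ i))) \<le> dinf P Q"
    unfolding dinf_def using True by (intro SUP_upper2[of "{i}"]) auto
  with d have ratio: "(if Q $ i = 0 then \<infinity> else ereal (ln (P $ i / Q $ i))) \<le> ereal \<delta>"
    by (rule order_trans[rotated])
  then have "Q $ i \<noteq> 0" by (cases "Q $ i = 0") auto
  with Q have Q_pos: "Q $ i > 0" unfolding prob_simplex_def by (simp add: order_le_neq_trans)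
  with ratio have "ln (P $ i / Q $ i) \<le> \<delta>" by simp
  then have "P $ i / Q $ i \<le> exp \<delta>"
    using True Q_pos by (metis exp_le_cancel_iff exp_ln divide_pos_pos)
  with Q_pos have "P $ i * exp (- \<delta>) \<le> Q $ i"
    by (simp add: exp_minus field_simps)
  moreover have "P $ i * (1 - \<delta>) \<le> P $ i * exp (- \<delta>)"
    using True exp_ge_add_one_self[of "- \<delta>"] by (intro mult_left_mono) auto
  ultimately show ?thesis by (simp add: algebra_simps)
qed

lemma dinf_le_imp_inner_diff_le:
  assumes "P \<in> prob_simplex" and "Q \<in> prob_simplex" and "dinf P Q \<le> ereal \<delta>"
    and v: "\<forall>i. 0 \<le> v $ i"
  shows "(P - Q) \<bullet> v \<le> \<delta> * (P \<bullet> v)"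
proof -
  have "(P - Q) \<bullet> v = (\<Sum>i\<in>UNIV. (P $ i - Q $ i) * v $ i)" by (simp add: inner_vec_def)
  also have "\<dots> \<le> (\<Sum>i\<in>UNIV. \<delta> * P $ i * v $ i)"
    using assms by (intro sum_mono mult_right_mono dinf_le_imp_component_le) auto
  also have "\<dots> = \<delta> * (P \<bullet> v)" by (simp add: inner_vec_def sum_distrib_left mult.assoc)
  finally show ?thesis .
qed

lemma concave_gradient_step:
  fixes Phi :: "real^'n::finite \<Rightarrow> real"
  assumes conc: "concave_on UNIV Phi"
    and grad: "(Phi has_derivative (\<lambda>h. g (x + v) \<bullet> h)) (at (x + v))"
    and simplex: "g x \<in> prob_simplex" "g (x + v) \<in> prob_simplex"
    and stable: "dinf (g x) (g (x + v)) \<le> ereal \<delta>" and v: "\<forall>i. 0 \<le> v $ i"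
  shows "g x \<bullet> v \<le> Phi (x + v) - Phi x + \<delta> * (g x \<bullet> v)"
proof -
  have "Phi x \<le> Phi (x + v) + g (x + v) \<bullet> (x - (x + v))"
    by (rule concave_on_has_derivative_le[OF conc grad])
  then have "g (x + v) \<bullet> v \<le> Phi (x + v) - Phi x" by simp
  moreover have "(g x - g (x + v)) \<bullet> v \<le> \<delta> * (g x \<bullet> v)"
    by (rule dinf_le_imp_inner_diff_le[OF simplex stable v])
  ultimately show ?thesis by (simp add: inner_diff_left)
qed

lemma cumest_cong:
  "(\<And>s. s \<in> {1..t} \<Longrightarrow> js s = js' s) \<Longrightarrow> cumest g E l js t = cumest g E l js' t"
proof (induction t)
  case (Suc t)
  then have "cumest g E l js t = cumest g E l js' t" and "js (Suc t) = js' (Suc t)" by auto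
  then show ?case by (simp only: cumest.simps Let_def)
qed simp

lemma qprob_cong:
  "(\<And>s. s \<in> {1..<t} \<Longrightarrow> js s = js' s) \<Longrightarrow> qprob g E l js t j = qprob g E l js' t j"
  unfolding qprob_def pvec_def by (subst cumest_cong[of "t - 1" js js']) auto

lemma qprob_Suc:
  "qprob g E l js (Suc t) j = (\<Sum>i\<in>{i. E i (Suc t) = j}. g (cumest g E l js t) $ i)"
  unfolding qprob_def pvec_def by simp

lemma cumest_Suc_lhat:
  "cumest g E l js (Suc t) = cumest g E l js t +
     (\<chi> i. if E i (Suc t) = js (Suc t) then lhat g E l js (Suc t) else 0)"
  unfolding lhat_def qprob_Suc by (simp add: Let_def)

declare cumest.simps(2) [simp del]

lemma qprob_nonneg:
  assumes "\<And>L. g L \<in> prob_simplex"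
  shows "0 \<le> qprob g E l js t j"
  using assms unfolding qprob_def pvec_def prob_simplex_def by (auto intro: sum_nonneg)

lemma sum_qprob:
  assumes "\<And>L. g L \<in> prob_simplex"
  shows "(\<Sum>j\<in>UNIV. qprob g E l js t j) = 1"
proof -
  have "(\<Sum>j\<in>UNIV. qprob g E l js t j) = (\<Sum>i\<in>UNIV. pvec g E l js t $ i)"
    unfolding qprob_def using sum.group[of UNIV UNIV "\<lambda>i. E i t" "\<lambda>i. pvec g E l js t $ i"] by simp
  also have "\<dots> = 1" using assms unfolding pvec_def prob_simplex_def by auto
  finally show ?thesis .
qed

definition path_weight :: "(real^'n::finite \<Rightarrow> real^'n) \<Rightarrow> ('n \<Rightarrow> nat \<Rightarrow> 'k::finite)
      \<Rightarrow> (nat \<Rightarrow> 'k \<Rightarrow> real) \<Rightarrow> nat \<Rightarrow> (nat \<Rightarrow> 'k) \<Rightarrow> real" where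
  "path_weight g E l T js = (\<Prod>t\<in>{1..T}. qprob g E l js t (js t))"

lemma ExpL_path_weight:
  "ExpL g E l T f = (\<Sum>js\<in>PiE {1..T} (\<lambda>_. UNIV). path_weight g E l T js * f js)"
  unfolding ExpL_def path_weight_def ..

lemma path_weight_fun_upd:
  "path_weight g E l (Suc T) (js(Suc T := j)) = path_weight g E l T js * qprob g E l js (Suc T) j"
proof -
  have "path_weight g E l T (js(Suc T := j)) = path_weight g E l T js"
    unfolding path_weight_def by (intro prod.cong refl, subst qprob_cong[where js' = js]) auto
  moreover have "qprob g E l (js(Suc T := j)) (Suc T) j = qprob g E l js (Suc T) j"
    by (rule qprob_cong) auto
  ultimately show ?thesis by (simp add: path_weight_def atLeastAtMostSuc_conv)
qed

lemma sum_PiE_atLeastAtMost_Suc: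
  fixes f :: "(nat \<Rightarrow> 'a::finite) \<Rightarrow> real"
  shows "(\<Sum>js\<in>PiE {1..Suc T} (\<lambda>_. UNIV). f js) =
         (\<Sum>js\<in>PiE {1..T} (\<lambda>_. UNIV). \<Sum>j\<in>UNIV. f (js(Suc T := j)))"
proof -
  have "{1..Suc T} = insert (Suc T) {1..T}" by auto
  then have "(\<Sum>js\<in>PiE {1..Suc T} (\<lambda>_. UNIV). f js) =
      (\<Sum>(j, js)\<in>UNIV \<times> PiE {1..T} (\<lambda>_. UNIV::'a set). f (js(Suc T := j)))"
    by (simp only: PiE_insert_eq, subst sum.reindex[OF inj_combinator]) (auto simp: case_prod_beta)
  also have "\<dots> = (\<Sum>js\<in>PiE {1..T} (\<lambda>_. UNIV). \<Sum>j\<in>UNIV. f (js(Suc T := j)))"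
    by (simp add: sum.cartesian_product[symmetric] sum.swap[of _ UNIV])
  finally show ?thesis .
qed

lemma ExpL_Suc:
  "ExpL g E l (Suc T) f =
     ExpL g E l T (\<lambda>js. \<Sum>j\<in>UNIV. qprob g E l js (Suc T) j * f (js(Suc T := j)))"
  unfolding ExpL_path_weight sum_PiE_atLeastAtMost_Suc
  by (simp add: path_weight_fun_upd sum_distrib_left mult.assoc)

lemma ExpL_add: "ExpL g E l T (\<lambda>js. f js + h js) = ExpL g E l T f + ExpL g E l T h"
  unfolding ExpL_def by (simp add: distrib_left sum.distrib)

lemma ExpL_cmult: "ExpL g E l T (\<lambda>js. c * f js) = c * ExpL g E l T f"
  unfolding ExpL_def by (simp add: sum_distrib_left ac_simps)

lemma ExpL_const:
  assumes "\<And>L. g L \<in> prob_simplex"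
  shows "ExpL g E l T (\<lambda>_. c) = c"
proof (induction T)
  case (Suc T)
  then show ?case
    by (simp add: ExpL_Suc sum_distrib_right[symmetric] sum_qprob[OF assms])
qed (simp add: ExpL_def)

lemma ExpL_mono:
  assumes "\<And>L. g L \<in> prob_simplex"
    and "\<And>js. \<forall>t\<in>{1..T}. qprob g E l js t (js t) \<noteq> 0 \<Longrightarrow> f js \<le> h js"
  shows "ExpL g E l T f \<le> ExpL g E l T h"
  unfolding ExpL_path_weight
proof (intro sum_mono)
  fix js
  show "path_weight g E l T js * f js \<le> path_weight g E l T js * h js"
  proof (cases "\<forall>t\<in>{1..T}. qprob g E l js t (js t) \<noteq> 0")
    case True
    then show ?thesis using assms
      by (intro mult_left_mono) (auto simp: path_weight_def intro: prod_nonneg qprob_nonneg)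
  next
    case False
    then have "path_weight g E l T js = 0" unfolding path_weight_def by auto
    then show ?thesis by simp
  qed
qed

lemma ExpL_cumest_le:
  assumes simplex: "\<And>L. g L \<in> prob_simplex" and nonneg: "\<And>t j. 0 \<le> l t j"
  shows "ExpL g E l T (\<lambda>js. cumest g E l js T $ i) \<le> (\<Sum>t\<in>{1..T}. l t (E i t))"
proof (induction T)
  case (Suc T)
  let ?q = "\<lambda>js. qprob g E l js (Suc T)" and ?e = "E i (Suc T)"
  have "(\<Sum>j\<in>UNIV. ?q js j * cumest g E l (js(Suc T := j)) (Suc T) $ i)
      \<le> cumest g E l js T $ i + l (Suc T) ?e" for js
  proof -
    have "cumest g E l (js(Suc T := j)) T = cumest g E l js T" for j
      by (rule cumest_cong) auto
    moreover have "qprob g E l (js(Suc T := j)) (Suc T) j' = ?q js j'" for j j'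
      by (rule qprob_cong) auto
    ultimately have "(\<Sum>j\<in>UNIV. ?q js j * cumest g E l (js(Suc T := j)) (Suc T) $ i)
        = (\<Sum>j\<in>UNIV. ?q js j * cumest g E l js T $ i
            + (if ?e = j then ?q js j * (l (Suc T) j / ?q js j) else 0))"
      by (intro sum.cong) (simp_all add: cumest_Suc_lhat lhat_def algebra_simps)
    also have "\<dots> = cumest g E l js T $ i + ?q js ?e * (l (Suc T) ?e / ?q js ?e)"
      by (simp add: sum.distrib sum_distrib_right[symmetric] sum_qprob[OF simplex])
    also have "\<dots> \<le> cumest g E l js T $ i + l (Suc T) ?e"
      \<comment> \<open>strict only if the expert's action has probability 0, where the estimate is l / 0 = 0\<close>
      using nonneg by (cases "?q js ?e = 0") auto
    finally show ?thesis .
  qed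
  then have "ExpL g E l (Suc T) (\<lambda>js. cumest g E l js (Suc T) $ i)
      \<le> ExpL g E l T (\<lambda>js. cumest g E l js T $ i + l (Suc T) ?e)"
    unfolding ExpL_Suc by (intro ExpL_mono[OF simplex])
  also have "\<dots> \<le> (\<Sum>t\<in>{1..Suc T}. l t (E i t))"
    using Suc by (simp add: ExpL_add ExpL_const[OF simplex])
  finally show ?case .
qed (simp add: ExpL_def)

definition dinf_stable :: "(real^'n::finite \<Rightarrow> real^'n) \<Rightarrow> real \<Rightarrow> bool" where
  "dinf_stable g \<epsilon> \<longleftrightarrow> (\<forall>t (v :: nat \<Rightarrow> real^'n). t \<ge> 1 \<longrightarrow> (\<forall>s\<in>{1..t}. \<forall>i. 0 \<le> v s $ i) \<longrightarrow>
      dinf (g (\<Sum>s\<in>{1..<t}. v s)) (g (\<Sum>s\<in>{1..t}. v s)) \<le> ereal (\<epsilon> * infnorm (v t)))"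

lemma cumest_increment_nonneg:
  assumes "\<And>L. g L \<in> prob_simplex" and "\<And>t j. 0 \<le> l t j"
  shows "0 \<le> (cumest g E l js (Suc t) - cumest g E l js t) $ i"
  using assms by (auto simp: cumest_Suc_lhat lhat_def intro!: divide_nonneg_nonneg qprob_nonneg)

lemma dinf_stable_cumest:
  assumes stable: "dinf_stable g \<epsilon>"
    and simplex: "\<And>L. g L \<in> prob_simplex" and nonneg: "\<And>t j. 0 \<le> l t j"
  shows "dinf (g (cumest g E l js t)) (g (cumest g E l js (Suc t)))
      \<le> ereal (\<epsilon> * infnorm (cumest g E l js (Suc t) - cumest g E l js t))"
proof -
  define v where "v r = cumest g E l js r - cumest g E l js (r - 1)" for r
  have telescope: "(\<Sum>r\<in>{1..n}. v r) = cumest g E l js n" for n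
    unfolding v_def by (induction n) auto
  have "0 \<le> v s $ i" if "1 \<le> s" for s i
    using cumest_increment_nonneg[where l = l, OF simplex nonneg, where js = js and t = "s - 1" and i = i] that
    by (simp add: v_def)
  then have "dinf (g (\<Sum>r\<in>{1..<Suc t}. v r)) (g (\<Sum>r\<in>{1..Suc t}. v r))
      \<le> ereal (\<epsilon> * infnorm (v (Suc t)))"
    by (intro stable[unfolded dinf_stable_def, rule_format]) auto
  then show ?thesis
    unfolding atLeastLessThanSuc_atLeastAtMost telescope by (simp add: v_def)
qed

lemma cumest_step_le:
  fixes Phi :: "real^'n::finite \<Rightarrow> real"
  assumes conc: "concave_on UNIV Phi" and grad: "\<And>L. (Phi has_derivative (\<lambda>h. g L \<bullet> h)) (at L)"
    and simplex: "\<And>L. g L \<in> prob_simplex" and stable: "dinf_stable g \<epsilon>"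
    and nonneg: "\<And>t j. 0 \<le> l t j" and q_nz: "qprob g E l js (Suc t) (js (Suc t)) \<noteq> 0"
  shows "l (Suc t) (js (Suc t)) \<le> Phi (cumest g E l js (Suc t)) - Phi (cumest g E l js t)
      + \<epsilon> * ((lhat g E l js (Suc t))\<^sup>2 * qprob g E l js (Suc t) (js (Suc t)))"
proof -
  define x where "x = cumest g E l js t"
  define v where "v = cumest g E l js (Suc t) - x"
  define A where "A = {i. E i (Suc t) = js (Suc t)}"
  define Q where "Q = qprob g E l js (Suc t) (js (Suc t))"
  define lh where "lh = lhat g E l js (Suc t)"
  have Q: "Q = (\<Sum>i\<in>A. g x $ i)" unfolding Q_def A_def x_def by (rule qprob_Suc)
  have "0 \<le> Q" unfolding Q_def by (rule qprob_nonneg[OF simplex])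
  with q_nz have Q_pos: "Q > 0" unfolding Q_def by simp
  have loss: "l (Suc t) (js (Suc t)) = lh * Q"
    using Q_pos unfolding lh_def lhat_def Q_def by simp
  have lh_nonneg: "0 \<le> lh"
    using nonneg \<open>0 \<le> Q\<close> unfolding lh_def lhat_def Q_def by simp
  have v: "v = (\<chi> i. if i \<in> A then lh else 0)"
    unfolding v_def x_def A_def lh_def by (simp add: cumest_Suc_lhat)
  have "g x \<bullet> v = (\<Sum>i\<in>A. g x $ i) * lh"
    by (simp add: v inner_vec_def if_distrib sum.If_cases sum_distrib_right)
  then have inner: "g x \<bullet> v = lh * Q" using Q by simp
  obtain i0 where "i0 \<in> A" using Q Q_pos by fastforce
  have "infnorm v = lh"
  proof (rule antisym)
    show "infnorm v \<le> lh" unfolding infnorm_cart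
      by (rule cSup_least) (use lh_nonneg in \<open>auto simp: v\<close>)
    show "lh \<le> infnorm v"
      using component_le_infnorm_cart[of v i0] \<open>i0 \<in> A\<close> lh_nonneg by (simp add: v)
  qed
  then have stable_step: "dinf (g x) (g (x + v)) \<le> ereal (\<epsilon> * lh)"
    using dinf_stable_cumest[where l = l and E = E and js = js and t = t, OF stable simplex nonneg]
    by (simp add: x_def v_def)
  have "\<forall>i. 0 \<le> v $ i" using lh_nonneg by (simp add: v)
  from concave_gradient_step[where g = g, OF conc grad simplex simplex stable_step this]
  have "lh * Q \<le> Phi (x + v) - Phi x + \<epsilon> * lh * (lh * Q)"
    unfolding inner .
  then show ?thesis
    by (simp add: loss lh_def Q_def x_def v_def power2_eq_square ac_simps)
qed

lemma cumest_regret_le: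
  fixes Phi :: "real^'n::finite \<Rightarrow> real"
  assumes conc: "concave_on UNIV Phi" and grad: "\<And>L. (Phi has_derivative (\<lambda>h. g L \<bullet> h)) (at L)"
    and simplex: "\<And>L. g L \<in> prob_simplex" and stable: "dinf_stable g \<epsilon>"
    and nonneg: "\<And>t j. 0 \<le> l t j" and q_nz: "\<forall>t\<in>{1..T}. qprob g E l js t (js t) \<noteq> 0"
  shows "(\<Sum>t\<in>{1..T}. l t (js t)) \<le> Phi (cumest g E l js T) - Phi 0
      + \<epsilon> * (\<Sum>t\<in>{1..T}. (lhat g E l js t)\<^sup>2 * qprob g E l js t (js t))"
  using q_nz
proof (induction T)
  case (Suc T)
  then have "qprob g E l js (Suc T) (js (Suc T)) \<noteq> 0" by simp
  from cumest_step_le[where l = l, OF conc grad simplex stable nonneg this] Suc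
  show ?case by (simp add: sum.cl_ivl_Suc distrib_left)
qed simp

lemma Phi_tilde_diff_le:
  assumes M: "prob_space M"
    and min_attained: "\<forall>z L. \<exists>p\<in>prob_simplex. \<forall>q\<in>prob_simplex. L \<bullet> p + F p z \<le> L \<bullet> q + F q z"
    and max_attained: "\<forall>z. \<exists>p\<in>prob_simplex. \<forall>q\<in>prob_simplex. F q z \<le> F p z"
    and integ_Phi: "\<forall>L. integrable M (\<lambda>z. INF p\<in>prob_simplex. L \<bullet> p + F p z)"
    and integ_range: "integrable M (\<lambda>z. (SUP p\<in>prob_simplex. F p z) - (INF p\<in>prob_simplex. F p z))"
  shows "Phi_tilde M F L - Phi_tilde M F 0 \<le> L $ i +
     (\<integral>z. (SUP p\<in>prob_simplex. F p z) - (INF p\<in>prob_simplex. F p z) \<partial>M)"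
proof -
  interpret prob_space M by (rule M)
  have vertex: "axis i 1 \<in> prob_simplex" unfolding prob_simplex_def by (auto simp: axis_def)
  have integ0: "integrable M (\<lambda>z. INF p\<in>prob_simplex. F p z)"
    using integ_Phi[rule_format, of 0] by simp
  have "(INF p\<in>prob_simplex. L \<bullet> p + F p z) - (INF p\<in>prob_simplex. F p z)
      \<le> L $ i + ((SUP p\<in>prob_simplex. F p z) - (INF p\<in>prob_simplex. F p z))" for z
  proof -
    obtain p where "\<forall>q\<in>prob_simplex. L \<bullet> p + F p z \<le> L \<bullet> q + F q z"
      using min_attained by blast
    then have "(INF p\<in>prob_simplex. L \<bullet> p + F p z) \<le> L \<bullet> axis i 1 + F (axis i 1) z"
      using vertex by (intro cINF_lower bdd_belowI2) auto
    moreover obtain p' where "\<forall>q\<in>prob_simplex. F q z \<le> F p' z"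
      using max_attained by blast
    then have "F (axis i 1) z \<le> (SUP p\<in>prob_simplex. F p z)"
      using vertex by (intro cSUP_upper bdd_aboveI2) auto
    ultimately show ?thesis by (simp add: inner_axis)
  qed
  then have "(\<integral>z. (INF p\<in>prob_simplex. L \<bullet> p + F p z) - (INF p\<in>prob_simplex. F p z) \<partial>M)
      \<le> (\<integral>z. L $ i + ((SUP p\<in>prob_simplex. F p z) - (INF p\<in>prob_simplex. F p z)) \<partial>M)"
    using integ_Phi integ0 integ_range by (intro integral_mono) auto
  then show ?thesis
    using integ_Phi integ0 integ_range by (simp add: Phi_tilde_def prob_space)
qed

theorem lemma9:
  fixes M :: "'z measure"
    and F :: "real^'n::finite \<Rightarrow> 'z \<Rightarrow> real"
    and g :: "real^'n \<Rightarrow> real^'n"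
    and E :: "'n \<Rightarrow> nat \<Rightarrow> 'k::finite"
    and l :: "nat \<Rightarrow> 'k \<Rightarrow> real"
    and T :: nat and \<epsilon> :: real
  assumes M: "prob_space M"
    and min_attained: "\<forall>z L. \<exists>p\<in>prob_simplex. \<forall>q\<in>prob_simplex. L \<bullet> p + F p z \<le> L \<bullet> q + F q z"
    and max_attained: "\<forall>z. \<exists>p\<in>prob_simplex. \<forall>q\<in>prob_simplex. F q z \<le> F p z"
    and integ_Phi: "\<forall>L. integrable M (\<lambda>z. INF p\<in>prob_simplex. L \<bullet> p + F p z)"
    and integ_range: "integrable M (\<lambda>z. (SUP p\<in>prob_simplex. F p z) - (INF p\<in>prob_simplex. F p z))"
    and grad: "\<forall>L. (Phi_tilde M F has_derivative (\<lambda>h. g L \<bullet> h)) (at L)"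
    and grad_simplex: "\<forall>L. g L \<in> prob_simplex"
    and stable: "\<forall>t (v :: nat \<Rightarrow> real^'n). t \<ge> 1 \<longrightarrow> (\<forall>s\<in>{1..t}. \<forall>i. 0 \<le> v s $ i) \<longrightarrow>
        dinf (g (\<Sum>s\<in>{1..<t}. v s)) (g (\<Sum>s\<in>{1..t}. v s)) \<le> ereal (\<epsilon> * infnorm (v t))"
    and loss_range: "\<forall>t j. 0 \<le> l t j \<and> l t j \<le> 1"
  shows "ExpL g E l T (\<lambda>js. \<Sum>t\<in>{1..T}. l t (js t))
           - (MIN i. \<Sum>t\<in>{1..T}. l t (E i t))
         \<le> \<epsilon> * ExpL g E l T (\<lambda>js. \<Sum>t\<in>{1..T}. (lhat g E l js t)\<^sup>2 * qprob g E l js t (js t))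
           + (\<integral>z. (SUP p\<in>prob_simplex. F p z) - (INF p\<in>prob_simplex. F p z) \<partial>M)"
proof -
  let ?R = "\<integral>z. (SUP p\<in>prob_simplex. F p z) - (INF p\<in>prob_simplex. F p z) \<partial>M"
  let ?X = "\<lambda>js. \<Sum>t\<in>{1..T}. (lhat g E l js t)\<^sup>2 * qprob g E l js t (js t)"
  have simplex: "\<And>L. g L \<in> prob_simplex" and nonneg: "\<And>t j. 0 \<le> l t j"
    using grad_simplex loss_range by auto
  have conc: "concave_on UNIV (Phi_tilde M F)"
    using min_attained integ_Phi by (intro concave_on_Phi_tilde) auto
  have "(MIN i. \<Sum>t\<in>{1..T}. l t (E i t)) \<in> range (\<lambda>i. \<Sum>t\<in>{1..T}. l t (E i t))"
    by (rule Min_in) auto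
  then obtain i where i: "(MIN i. \<Sum>t\<in>{1..T}. l t (E i t)) = (\<Sum>t\<in>{1..T}. l t (E i t))"
    by blast
  have "(\<Sum>t\<in>{1..T}. l t (js t)) \<le> cumest g E l js T $ i + ?R + \<epsilon> * ?X js"
    if "\<forall>t\<in>{1..T}. qprob g E l js t (js t) \<noteq> 0" for js
    using cumest_regret_le[where l = l, OF conc grad[rule_format] simplex
        stable[folded dinf_stable_def] nonneg that]
      Phi_tilde_diff_le[OF M min_attained max_attained integ_Phi integ_range, of "cumest g E l js T" i]
    by linarith
  then have "ExpL g E l T (\<lambda>js. \<Sum>t\<in>{1..T}. l t (js t))
      \<le> ExpL g E l T (\<lambda>js. cumest g E l js T $ i + ?R + \<epsilon> * ?X js)"
    by (rule ExpL_mono[OF simplex])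
  also have "\<dots> = ExpL g E l T (\<lambda>js. cumest g E l js T $ i) + ?R + \<epsilon> * ExpL g E l T ?X"
    by (simp add: ExpL_add ExpL_cmult ExpL_const[OF simplex])
  also have "\<dots> \<le> (\<Sum>t\<in>{1..T}. l t (E i t)) + ?R + \<epsilon> * ExpL g E l T ?X"
    using ExpL_cumest_le[where l = l, OF simplex nonneg] by simp
  finally show ?thesis unfolding i by simp
qed

end
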